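(* Assume $|p_1|=\Gamma_{\mathrm{rel}}\ell$ and $g[\![\rho]\!]-\Gamma_{\mathrm{rel}}^2\coth(p_1/\Gamma_{\mathrm{rel}})<0$, let $\lambda^*>0$ be the unique solution of $g[\![\rho]\!]=\Gamma_{\mathrm{rel}}^2\coth(p_1/\Gamma_{\mathrm{rel}})-\lambda^2\coth((p_1-p_0)/\lambda)$, and let $\varphi^*$ be a generator of the null space of $\mathcal L_{\lambda^*}$. Then $$\frac{d}{d\lambda}\Big(\mathcal L_\lambda\varphi^*\Big)\Big|_{\lambda=\lambda^*}\notin\mathcal R(\mathcal L_{\lambda^*}).$$
   Context: Constants $g>0$, $\ell>0$, $p_0<p_1<0$, $[\![\rho]\!]<0$, $\Gamma_{\mathrm{rel}}>0$. Period $2\pi$ in $q$. $D_1=\{(q,p):p_1<p<0\}$, $D_2=\{(q,p):p_0<p<p_1\}$, $D=D_1\cup D_2$, $I=\{p=p_1\}$, $T=\{p=0\}$; $f^{(i)}=f|_{D_i}$, $[\![f]\!]=f^{(1)}|_I-f^{(2)}|_I$. $C^{k+\alpha}_{\mathrm{per}}$ means $C^{k+\alpha}$, $2\pi$-periodic and even in $q$; $d(\varphi)=\frac1{2\pi}\int_{-\pi}^\pi\varphi(q,p_1)dq$. $X=\{\varphi\in C^{2+\alpha}_{\mathrm{per}}(\overline D\setminus I)\cap C^{\alpha}_{\mathrm{per}}(\overline D):\varphi|_{p=p_0}=0,\ \varphi^{(i)}\in C^{1+\alpha}_{\mathrm{per}}(\overline{D_i})\}$, $Y=Y_1\times Y_2\times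 Y_3\times Y_4$ with $Y_1=C^{2+\alpha}_{\mathrm{per}}(\overline{D_1}\setminus I)\cap C^\alpha_{\mathrm{per}}(\overline{D_1})$, $Y_2=C^{2+\alpha}_{\mathrm{per}}(\overline{D_2}\setminus I)\cap C^\alpha_{\mathrm{per}}(\overline{D_2})$, $Y_3=C^\alpha_{\mathrm{per}}(I)$, $Y_4=C^{2+\alpha}_{\mathrm{per}}(T)$. For $\lambda>0$ let $H_p(\cdot;\lambda)=1/\Gamma_{\mathrm{rel}}$ on $D_1$ and $=1/\lambda$ on $D_2$, and $\mathcal L_\lambda:X\to Y$, $\mathcal L_\lambda\varphi=\big((\partial_p^2+H_p^2\partial_q^2)\varphi^{(1)},\ (\partial_p^2+H_p^2\partial_q^2)\varphi^{(2)},\ 2[\![H_p^{-3}\varphi_p]\!]-2g[\![\rho]\!]\varphi|_I,\ (\varphi-d(\varphi))|_T\big)$ (the linearization of the height-equation operator about the laminar flow with parameter $\lambda$; its $\lambda$-derivative is the mixed derivative $\mathcal F_{\lambda w}(\lambda^*,0)$). $\mathcal R$ denotes the range. *)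

theory Defs
  imports "HOL-Analysis.Analysis"
begin

text \<open>Layer 1: p1 < p < 0 (closure p1 \<le> p \<le> 0); layer 2: p0 < p < p1; interface I: p = p1;
  top T: p = 0.\<close>

definition coth :: "real \<Rightarrow> real" where
  "coth x = cosh x / sinh x"

definition holder_on :: "real \<Rightarrow> 'a::metric_space set \<Rightarrow> ('a \<Rightarrow> real) \<Rightarrow> bool" where
  "holder_on a S f \<longleftrightarrow> (\<exists>C. \<forall>x\<in>S. \<forall>y\<in>S. \<bar>f x - f y\<bar> \<le> C * dist x y powr a)"

text \<open>Partial derivative on a strip UNIV \<times> J: True = derivative in q,
  False = derivative in p (one-sided at endpoints of J, i.e. taken within J).\<close>
definition pdiff :: "real set \<Rightarrow> bool \<Rightarrow> (real \<times> real \<Rightarrow> real) \<Rightarrow> real \<times> real \<Rightarrow> real" where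
  "pdiff J b f x = (if b then deriv (\<lambda>t. f (t, snd x)) (fst x)
                    else vector_derivative (\<lambda>t. f (fst x, t)) (at (snd x) within J))"

definition pdiffable :: "real set \<Rightarrow> bool \<Rightarrow> (real \<times> real \<Rightarrow> real) \<Rightarrow> real \<times> real \<Rightarrow> bool" where
  "pdiffable J b f x = (if b then (\<lambda>t. f (t, snd x)) differentiable (at (fst x))
                        else (\<lambda>t. f (fst x, t)) differentiable (at (snd x) within J))"

fun pd :: "real set \<Rightarrow> bool list \<Rightarrow> (real \<times> real \<Rightarrow> real) \<Rightarrow> real \<times> real \<Rightarrow> real" where
  "pd J [] f = f"
| "pd J (b # bs) f = pdiff J b (pd J bs f)"

definition Cka :: "real \<Rightarrow> nat \<Rightarrow> real set \<Rightarrow> (real \<times> real \<Rightarrow> real) \<Rightarrow> bool" where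
  "Cka a k J f \<longleftrightarrow>
     (\<forall>bs b x. length bs < k \<longrightarrow> x \<in> UNIV \<times> J \<longrightarrow> pdiffable J b (pd J bs f) x) \<and>
     (\<forall>bs. length bs \<le> k \<longrightarrow> continuous_on (UNIV \<times> J) (pd J bs f)) \<and>
     (\<forall>bs. length bs = k \<longrightarrow> holder_on a (UNIV \<times> J) (pd J bs f))"

definition per_even :: "real set \<Rightarrow> (real \<times> real \<Rightarrow> real) \<Rightarrow> bool" where
  "per_even J f \<longleftrightarrow> (\<forall>q p. p \<in> J \<longrightarrow> f (q + 2 * pi, p) = f (q, p) \<and> f (- q, p) = f (q, p))"

text \<open>C^{2+a}(closure D minus I) is read piecewise: C^{2+a} up to the boundary on each
  of the two connected pieces {p1 < p \<le> 0} and {p0 \<le> p < p1}.\<close>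
definition Xsp :: "real \<Rightarrow> real \<Rightarrow> real \<Rightarrow> (real \<times> real \<Rightarrow> real) \<Rightarrow> bool" where
  "Xsp a p0 p1 \<phi> \<longleftrightarrow>
     per_even {p0..0} \<phi> \<and>
     Cka a 2 {p1<..0} \<phi> \<and> Cka a 2 {p0..<p1} \<phi> \<and>
     Cka a 0 {p0..0} \<phi> \<and>
     Cka a 1 {p1..0} \<phi> \<and> Cka a 1 {p0..p1} \<phi> \<and>
     (\<forall>q. \<phi> (q, p0) = 0)"

definition dmean :: "real \<Rightarrow> (real \<times> real \<Rightarrow> real) \<Rightarrow> real" where
  "dmean p1 \<phi> = integral {-pi..pi} (\<lambda>q. \<phi> (q, p1)) / (2 * pi)"

type_synonym Yel = "(real \<times> real \<Rightarrow> real) \<times> (real \<times> real \<Rightarrow> real) \<times> (real \<Rightarrow> real) \<times> (real \<Rightarrow> real)"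

text \<open>Components 1, 2 are the operators on the layers
  (derivatives taken on the pieces {p1<p\<le>0} and {p0\<le>p<p1}); component 3 lives on I
  (one-sided normal derivatives from each layer); component 4 lives on T.
  H_p = 1/\<Gamma> on D1 and 1/\<lambda> on D2, so H_p^{-3} = \<Gamma>^3 resp. \<lambda>^3.\<close>
definition Lop :: "real \<Rightarrow> real \<Rightarrow> real \<Rightarrow> real \<Rightarrow> real \<Rightarrow> real \<Rightarrow> (real \<times> real \<Rightarrow> real) \<Rightarrow> Yel" where
  "Lop g jrho Gam p0 p1 lam \<phi> =
    ((\<lambda>x. pd {p1<..0} [False, False] \<phi> x + (1 / Gam)^2 * pd {p1<..0} [True, True] \<phi> x),
     (\<lambda>x. pd {p0..<p1} [False, False] \<phi> x + (1 / lam)^2 * pd {p0..<p1} [True, True] \<phi> x),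
     (\<lambda>q. 2 * (Gam ^ 3 * pd {p1..0} [False] \<phi> (q, p1) - lam ^ 3 * pd {p0..p1} [False] \<phi> (q, p1))
          - 2 * g * jrho * \<phi> (q, p1)),
     (\<lambda>q. \<phi> (q, 0) - dmean p1 \<phi>))"

definition eqY :: "real \<Rightarrow> real \<Rightarrow> Yel \<Rightarrow> Yel \<Rightarrow> bool" where
  "eqY p0 p1 u v \<longleftrightarrow>
     (\<forall>x \<in> UNIV \<times> {p1<..0}. fst u x = fst v x) \<and>
     (\<forall>x \<in> UNIV \<times> {p0..<p1}. fst (snd u) x = fst (snd v) x) \<and>
     (\<forall>q. fst (snd (snd u)) q = fst (snd (snd v)) q) \<and>
     (\<forall>q. snd (snd (snd u)) q = snd (snd (snd v)) q)"

definition zeroY :: Yel where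
  "zeroY = ((\<lambda>_. 0), (\<lambda>_. 0), (\<lambda>_. 0), (\<lambda>_. 0))"

definition dLop :: "real \<Rightarrow> real \<Rightarrow> real \<Rightarrow> real \<Rightarrow> real \<Rightarrow> real \<Rightarrow> (real \<times> real \<Rightarrow> real) \<Rightarrow> Yel" where
  "dLop g jrho Gam p0 p1 lam0 \<phi> =
    ((\<lambda>x. deriv (\<lambda>l. fst (Lop g jrho Gam p0 p1 l \<phi>) x) lam0),
     (\<lambda>x. deriv (\<lambda>l. fst (snd (Lop g jrho Gam p0 p1 l \<phi>)) x) lam0),
     (\<lambda>q. deriv (\<lambda>l. fst (snd (snd (Lop g jrho Gam p0 p1 l \<phi>))) q) lam0),
     (\<lambda>q. deriv (\<lambda>l. snd (snd (snd (Lop g jrho Gam p0 p1 l \<phi>))) q) lam0))"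

definition in_range :: "real \<Rightarrow> real \<Rightarrow> real \<Rightarrow> real \<Rightarrow> real \<Rightarrow> real \<Rightarrow> real \<Rightarrow> Yel \<Rightarrow> bool" where
  "in_range a g jrho Gam p0 p1 lam v \<longleftrightarrow>
     (\<exists>\<psi>. Xsp a p0 p1 \<psi> \<and> eqY p0 p1 (Lop g jrho Gam p0 p1 lam \<psi>) v)"

text \<open>\<phi> generates the null space of L_\<lambda> (elements of X identified when equal on the
  closed strip p0 \<le> p \<le> 0).\<close>
definition generates_kernel :: "real \<Rightarrow> real \<Rightarrow> real \<Rightarrow> real \<Rightarrow> real \<Rightarrow> real \<Rightarrow> real \<Rightarrow> (real \<times> real \<Rightarrow> real) \<Rightarrow> bool" where
  "generates_kernel a g jrho Gam p0 p1 lam \<phi> \<longleftrightarrow>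
     Xsp a p0 p1 \<phi> \<and> eqY p0 p1 (Lop g jrho Gam p0 p1 lam \<phi>) zeroY \<and>
     (\<exists>x \<in> UNIV \<times> {p0..0}. \<phi> x \<noteq> 0) \<and>
     (\<forall>\<psi>. Xsp a p0 p1 \<psi> \<longrightarrow> eqY p0 p1 (Lop g jrho Gam p0 p1 lam \<psi>) zeroY \<longrightarrow>
          (\<exists>c. \<forall>x \<in> UNIV \<times> {p0..0}. \<psi> x = c * \<phi> x))"

end

theory Submission
  imports Defs
begin

(* The kernel of L_\<lambda> at \<lambda>* is spanned by cos q W(p), with W a normalised sinh on each layer,
   so the \<lambda>-derivative of L_\<lambda> \<phi>* is explicit: it vanishes on the upper layer and on the top,
   and is a multiple of cos q W on the lower layer and of cos q W'(p1) on the interface.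
   If L_\<lambda>* \<psi> were equal to it, the cosine coefficient H(p) of \<psi> would satisfy H'' = H/\<Gamma>^2
   above the interface, H'' = H/\<lambda>^2 + \<kappa> W below it, H(0) = H(p0) = 0, and the linearised
   interface condition. The Wronskians of H with W express both one-sided derivatives H'(p1)
   through H(p1); the dispersion relation then cancels H(p1) from the interface condition,
   leaving p1 - p0 = -2 \<lambda> sinh((p1 - p0)/\<lambda>) cosh((p1 - p0)/\<lambda>) < 0. *)

section \<open>Partial derivatives and Hoelder regularity\<close>

lemma holder_on_if_bounded_lipschitz:
  fixes f :: "'a::metric_space \<Rightarrow> real"
  assumes bounded: "\<And>x. x \<in> S \<Longrightarrow> \<bar>f x\<bar> \<le> M"
    and lipschitz: "L-lipschitz_on S f" and a: "0 < a" "a \<le> 1"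
  shows "holder_on a S f"
  unfolding holder_on_def
proof (intro exI[of _ "L + 2 * M"] ballI)
  fix x y assume x: "x \<in> S" and y: "y \<in> S"
  have "M \<ge> 0" using bounded[OF x] by linarith
  have "L \<ge> 0" using lipschitz_on_nonneg[OF lipschitz] .
  show "\<bar>f x - f y\<bar> \<le> (L + 2 * M) * dist x y powr a"
  proof (cases "dist x y \<le> 1")
    case True
    have "dist x y = dist x y powr 1" by (cases "dist x y = 0") auto
    also have "\<dots> \<le> dist x y powr a" using powr_mono'[OF a(2) _ True] by simp
    finally have "L * dist x y \<le> L * dist x y powr a" using \<open>L \<ge> 0\<close> by (simp add: mult_left_mono)
    moreover have "\<bar>f x - f y\<bar> \<le> L * dist x y"
      using lipschitz_onD[OF lipschitz x y] by (simp add: dist_real_def)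
    ultimately show ?thesis using \<open>M \<ge> 0\<close> by (simp add: algebra_simps add_increasing2)
  next
    case False
    then have "1 \<le> dist x y powr a" using a by (intro ge_one_powr_ge_zero) auto
    then have "2 * M \<le> 2 * M * dist x y powr a" using \<open>M \<ge> 0\<close> by (simp add: mult_le_cancel_left1)
    moreover have "\<bar>f x - f y\<bar> \<le> 2 * M" using bounded[OF x] bounded[OF y] by linarith
    ultimately show ?thesis using \<open>L \<ge> 0\<close> by (simp add: algebra_simps add_increasing)
  qed
qed

lemma holder_on_separable_product:
  fixes U V :: "real \<Rightarrow> real"
  assumes U_bound: "\<And>x. \<bar>U x\<bar> \<le> MU" and U_lip: "LU-lipschitz_on UNIV U"
    and V_bound: "\<And>x. x \<in> J \<Longrightarrow> \<bar>V x\<bar> \<le> MV" and V_lip: "LV-lipschitz_on J V"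
    and a: "0 < a" "a \<le> 1"
  shows "holder_on a (UNIV \<times> J) (\<lambda>x. U (fst x) * V (snd x))"
proof (rule holder_on_if_bounded_lipschitz[OF _ lipschitz_onI a,
      where M = "MU * MV" and L = "\<bar>MU\<bar> * LV + \<bar>MV\<bar> * LU"])
  fix x :: "real \<times> real" assume "x \<in> UNIV \<times> J"
  then show "\<bar>U (fst x) * V (snd x)\<bar> \<le> MU * MV"
    unfolding abs_mult using U_bound V_bound by (intro mult_mono) (auto intro: order_trans[OF abs_ge_zero])
next
  fix x y :: "real \<times> real" assume "x \<in> UNIV \<times> J" "y \<in> UNIV \<times> J"
  then have J: "snd x \<in> J" "snd y \<in> J" by auto
  have "\<bar>V (snd x) - V (snd y)\<bar> \<le> LV * dist x y"
    using lipschitz_onD[OF V_lip J] dist_snd_le[of x y] lipschitz_on_nonneg[OF V_lip]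
    by (simp add: dist_real_def) (meson mult_left_mono order_trans)
  then have "\<bar>U (fst x)\<bar> * \<bar>V (snd x) - V (snd y)\<bar> \<le> \<bar>MU\<bar> * (LV * dist x y)"
    using U_bound[of "fst x"] by (intro mult_mono) auto
  moreover have "\<bar>U (fst x) - U (fst y)\<bar> \<le> LU * dist x y"
    using lipschitz_onD[OF U_lip, of "fst x" "fst y"] dist_fst_le[of x y] lipschitz_on_nonneg[OF U_lip]
    by (simp add: dist_real_def) (meson mult_left_mono order_trans)
  then have "\<bar>V (snd y)\<bar> * \<bar>U (fst x) - U (fst y)\<bar> \<le> \<bar>MV\<bar> * (LU * dist x y)"
    using V_bound[OF J(2)] by (intro mult_mono) auto
  moreover have "\<bar>U (fst x) * V (snd x) - U (fst y) * V (snd y)\<bar> \<le>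
      \<bar>U (fst x)\<bar> * \<bar>V (snd x) - V (snd y)\<bar> + \<bar>V (snd y)\<bar> * \<bar>U (fst x) - U (fst y)\<bar>"
  proof -
    have "U (fst x) * V (snd x) - U (fst y) * V (snd y) =
        U (fst x) * (V (snd x) - V (snd y)) + V (snd y) * (U (fst x) - U (fst y))"
      by (simp add: algebra_simps)
    then show ?thesis by (metis abs_mult abs_triangle_ineq)
  qed
  ultimately show "dist (U (fst x) * V (snd x)) (U (fst y) * V (snd y)) \<le> (\<bar>MU\<bar> * LV + \<bar>MV\<bar> * LU) * dist x y"
    by (simp add: dist_real_def algebra_simps)
next
  show "0 \<le> \<bar>MU\<bar> * LV + \<bar>MV\<bar> * LU"
    using lipschitz_on_nonneg[OF U_lip] lipschitz_on_nonneg[OF V_lip] by simp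
qed

lemma lipschitz_on_Icc_if_continuous_derivative:
  fixes f :: "real \<Rightarrow> real"
  assumes "\<And>x. (f has_real_derivative f' x) (at x)" and "continuous_on {A..B} f'"
  obtains L where "L-lipschitz_on {A..B} f"
proof -
  obtain M where "M \<ge> 0" and M: "\<And>x. x \<in> {A..B} \<Longrightarrow> norm (f' x) \<le> M"
    using continuous_on_compact_bound[OF compact_Icc assms(2)] by blast
  have "dist (f x) (f y) \<le> M * dist x y" if "x \<in> {A..B}" "y \<in> {A..B}" for x y
    using field_differentiable_bound[OF convex_real_interval(5)
        has_field_derivative_at_within[OF assms(1)] M that]
    by (simp add: dist_norm)
  with \<open>M \<ge> 0\<close> show thesis by (intro that lipschitz_onI)
qed

lemma pdiff_separable_product:
  assumes du: "(u has_real_derivative u') (at (fst x))"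
    and dv: "(v has_real_derivative v') (at (snd x))"
    and nontrivial: "at (snd x) within J \<noteq> bot"
    and f: "\<And>y. y \<in> UNIV \<times> J \<Longrightarrow> f y = u (fst y) * v (snd y)"
    and x: "x \<in> UNIV \<times> J"
  shows "pdiff J b f x = (if b then u' * v (snd x) else u (fst x) * v') \<and> pdiffable J b f x"
proof (cases b)
  case True
  have "(\<lambda>t. f (t, snd x)) = (\<lambda>t. u t * v (snd x))" using f x by (auto simp: mem_Times_iff)
  with True DERIV_cmult_right[OF du] show ?thesis
    by (auto simp: pdiff_def pdiffable_def DERIV_imp_deriv real_differentiable_def)
next
  case False
  have "snd x \<in> J" using x by (auto simp: mem_Times_iff)
  have "((\<lambda>t. f (fst x, t)) has_real_derivative u (fst x) * v') (at (snd x) within J)"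
    by (rule has_field_derivative_transform_within[OF has_field_derivative_at_within[OF DERIV_cmult[OF dv]]
          zero_less_one \<open>snd x \<in> J\<close>]) (use f in auto)
  with False vector_derivative_within[OF nontrivial] show ?thesis
    by (auto simp: pdiff_def pdiffable_def real_differentiable_def
        has_real_derivative_iff_has_vector_derivative)
qed

text \<open>Here u n and v n stand for the n-th derivatives of u 0 and v 0, so a partial derivative
  of the separable product counts how often each variable was differentiated.\<close>

lemma pd_separable_product:
  assumes du: "\<And>n x. (u n has_real_derivative u (Suc n) x) (at x)"
    and dv: "\<And>n x. (v n has_real_derivative v (Suc n) x) (at x)"
    and nontrivial: "\<And>p. p \<in> J \<Longrightarrow> at p within J \<noteq> bot"
    and f: "\<And>y. y \<in> UNIV \<times> J \<Longrightarrow> f y = u 0 (fst y) * v 0 (snd y)"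
  shows "x \<in> UNIV \<times> J \<Longrightarrow> pd J bs f x = u (count_list bs True) (fst x) * v (count_list bs False) (snd x)"
proof (induction bs arbitrary: x)
  case Nil
  then show ?case using f by simp
next
  case (Cons b bs)
  have "at (snd x) within J \<noteq> bot" using nontrivial Cons.prems by (auto simp: mem_Times_iff)
  from pdiff_separable_product[OF du dv this Cons.IH Cons.prems, of b] show ?case by (cases b) auto
qed

lemma pdiffable_pd_separable_product:
  assumes du: "\<And>n x. (u n has_real_derivative u (Suc n) x) (at x)"
    and dv: "\<And>n x. (v n has_real_derivative v (Suc n) x) (at x)"
    and nontrivial: "\<And>p. p \<in> J \<Longrightarrow> at p within J \<noteq> bot"
    and f: "\<And>y. y \<in> UNIV \<times> J \<Longrightarrow> f y = u 0 (fst y) * v 0 (snd y)"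
    and x: "x \<in> UNIV \<times> J"
  shows "pdiffable J b (pd J bs f) x"
proof -
  have "at (snd x) within J \<noteq> bot" using nontrivial x by (auto simp: mem_Times_iff)
  from pdiff_separable_product[OF du dv this pd_separable_product[OF du dv nontrivial f] x]
  show ?thesis by blast
qed

lemma Cka_separable_product:
  assumes du: "\<And>n x. (u n has_real_derivative u (Suc n) x) (at x)"
    and dv: "\<And>n x. (v n has_real_derivative v (Suc n) x) (at x)"
    and u_bound: "\<And>n x. \<bar>u n x\<bar> \<le> M"
    and nontrivial: "\<And>p. p \<in> J \<Longrightarrow> at p within J \<noteq> bot" and J: "J \<subseteq> {A..B}"
    and f: "\<And>y. y \<in> UNIV \<times> J \<Longrightarrow> f y = u 0 (fst y) * v 0 (snd y)"
    and a: "0 < a" "a \<le> 1"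
  shows "Cka a k J f"
proof -
  have cont_v: "continuous_on S (v n)" for n S
    using dv by (meson DERIV_isCont continuous_at_imp_continuous_on)
  have product: "continuous_on (UNIV \<times> J) (\<lambda>x. u m (fst x) * v n (snd x))
      \<and> holder_on a (UNIV \<times> J) (\<lambda>x. u m (fst x) * v n (snd x))" for m n
  proof
    have "continuous_on UNIV (u m)" using du by (meson DERIV_isCont continuous_at_imp_continuous_on)
    then show "continuous_on (UNIV \<times> J) (\<lambda>x. u m (fst x) * v n (snd x))"
      by (intro continuous_on_mult continuous_on_compose2[OF _ continuous_on_fst[OF continuous_on_id]]
          continuous_on_compose2[OF cont_v continuous_on_snd[OF continuous_on_id]]) auto
    have "M-lipschitz_on UNIV (u m)"
      using field_differentiable_bound[of UNIV "u m" "u (Suc m)"] du u_bound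
        order_trans[OF abs_ge_zero u_bound]
      by (intro lipschitz_onI) (auto simp: dist_norm)
    moreover obtain L where "L-lipschitz_on {A..B} (v n)"
      using lipschitz_on_Icc_if_continuous_derivative[OF dv cont_v] .
    moreover obtain MV where "\<And>x. x \<in> {A..B} \<Longrightarrow> norm (v n x) \<le> MV"
      using continuous_on_compact_bound[OF compact_Icc cont_v] by blast
    ultimately show "holder_on a (UNIV \<times> J) (\<lambda>x. u m (fst x) * v n (snd x))"
      using J by (intro holder_on_separable_product[OF u_bound _ _ _ a, where MV = MV])
        (auto intro: lipschitz_on_subset)
  qed
  have pd_f: "\<And>bs x. x \<in> UNIV \<times> J \<Longrightarrow>
      pd J bs f x = u (count_list bs True) (fst x) * v (count_list bs False) (snd x)"
    by (rule pd_separable_product[OF du dv nontrivial f])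
  show ?thesis
    unfolding Cka_def
  proof (intro conjI allI impI)
    fix bs :: "bool list" and b and x :: "real \<times> real" assume "length bs < k" "x \<in> UNIV \<times> J"
    then show "pdiffable J b (pd J bs f) x"
      using pdiffable_pd_separable_product[OF du dv nontrivial f] by blast
  next
    fix bs :: "bool list"
    show "continuous_on (UNIV \<times> J) (pd J bs f)"
      using product by (rule continuous_on_eq[OF conjunct1]) (simp add: pd_f)
    have "holder_on a (UNIV \<times> J) (\<lambda>x. u (count_list bs True) (fst x) * v (count_list bs False) (snd x))"
      using product by blast
    then show "holder_on a (UNIV \<times> J) (pd J bs f)"
      unfolding holder_on_def by (simp add: pd_f cong: ball_cong)
  qed
qed

lemma Cka_zero_separable_product:
  fixes U V :: "real \<Rightarrow> real"
  assumes "\<And>x. \<bar>U x\<bar> \<le> MU" "LU-lipschitz_on UNIV U"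
    and "\<And>x. x \<in> J \<Longrightarrow> \<bar>V x\<bar> \<le> MV" "LV-lipschitz_on J V"
    and a: "0 < a" "a \<le> 1"
  shows "Cka a 0 J (\<lambda>x. U (fst x) * V (snd x))"
proof -
  have "continuous_on (UNIV \<times> J) (\<lambda>x. U (fst x) * V (snd x))"
    using lipschitz_on_continuous_on[OF assms(2)] lipschitz_on_continuous_on[OF assms(4)]
    by (intro continuous_on_mult continuous_on_compose2[OF _ continuous_on_fst[OF continuous_on_id]]
        continuous_on_compose2[OF _ continuous_on_snd[OF continuous_on_id]]) auto
  moreover have "holder_on a (UNIV \<times> J) (\<lambda>x. U (fst x) * V (snd x))"
    by (rule holder_on_separable_product[OF assms])
  ultimately show ?thesis by (simp add: Cka_def)
qed

lemma lipschitz_on_cos: "1-lipschitz_on (UNIV::real set) cos"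
  using field_differentiable_bound[of "UNIV::real set" cos "\<lambda>t. - sin t" 1]
  by (intro lipschitz_onI) (auto simp: dist_norm abs_sin_le_one intro: DERIV_cos)

lemma Cka_pdiffableD:
    "Cka a k J f \<Longrightarrow> length bs < k \<Longrightarrow> x \<in> UNIV \<times> J \<Longrightarrow> pdiffable J b (pd J bs f) x"
  and Cka_continuous_onD:
    "Cka a k J f \<Longrightarrow> length bs \<le> k \<Longrightarrow> continuous_on (UNIV \<times> J) (pd J bs f)"
  unfolding Cka_def by blast+

lemma at_within_interior_interval:
  "x \<in> {A<..<B} \<Longrightarrow> {A<..<B} \<subseteq> J \<Longrightarrow> at x within J = at (x::real)"
  by (rule at_within_interior) (meson interior_maximal open_greaterThanLessThan subsetD)

lemma Cka_has_real_derivative_p: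
  assumes "Cka a k J \<psi>" "length bs < k" "x \<in> {A<..<B}" "{A<..<B} \<subseteq> J"
  shows "((\<lambda>s. pd J bs \<psi> (t, s)) has_real_derivative pd J (False # bs) \<psi> (t, x)) (at x)"
proof -
  have "pdiffable J False (pd J bs \<psi>) (t, x)"
    using assms by (intro Cka_pdiffableD[OF assms(1,2)]) auto
  then have "((\<lambda>s. pd J bs \<psi> (t, s)) has_vector_derivative pd J (False # bs) \<psi> (t, x)) (at x within J)"
    unfolding pdiffable_def pd.simps pdiff_def if_False fst_conv snd_conv
    by (rule vector_derivative_works[THEN iffD1])
  then show ?thesis
    unfolding at_within_interior_interval[OF assms(3,4)] has_real_derivative_iff_has_vector_derivative .
qed

lemma Cka_has_real_derivative_q:
  assumes "Cka a k J \<psi>" "length bs < k" "p \<in> J"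
  shows "((\<lambda>s. pd J bs \<psi> (s, p)) has_real_derivative pd J (True # bs) \<psi> (t, p)) (at t)"
proof -
  have "pdiffable J True (pd J bs \<psi>) (t, p)"
    using assms by (intro Cka_pdiffableD[OF assms(1,2)]) auto
  then show ?thesis
    unfolding pdiffable_def pd.simps pdiff_def if_True fst_conv snd_conv
    by (rule DERIV_deriv_iff_real_differentiable[THEN iffD2])
qed

lemma pd_p_interior_eq:
  assumes "s \<in> {A<..<B}" "{A<..<B} \<subseteq> J" "{A<..<B} \<subseteq> J'"
  shows "pd J [False] \<psi> (t, s) = pd J' [False] \<psi> (t, s)"
  unfolding pd.simps pdiff_def if_False fst_conv snd_conv
    at_within_interior_interval[OF assms(1,2)] at_within_interior_interval[OF assms(1,3)] ..

section \<open>The kernel mode\<close>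

definition cos_derivs :: "real \<Rightarrow> nat \<Rightarrow> real \<Rightarrow> real" where
  "cos_derivs A n x = A * cos (x + real n * (pi / 2))"

definition sinh_derivs :: "real \<Rightarrow> real \<Rightarrow> real \<Rightarrow> nat \<Rightarrow> real \<Rightarrow> real" where
  "sinh_derivs k b C n p = C * k ^ n * (if even n then sinh (k * (p - b)) else cosh (k * (p - b)))"

lemma has_real_derivative_cos_derivs:
  "(cos_derivs A n has_real_derivative cos_derivs A (Suc n) x) (at x)"
proof -
  have "cos (x + real (Suc n) * (pi / 2)) = - sin (x + real n * (pi / 2))"
    using cos_add[of "x + real n * (pi / 2)" "pi / 2"] by (simp add: algebra_simps add_divide_distrib)
  then show ?thesis unfolding cos_derivs_def by (auto intro!: derivative_eq_intros)
qed

lemma abs_cos_derivs_le: "\<bar>cos_derivs A n x\<bar> \<le> \<bar>A\<bar>"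
  unfolding cos_derivs_def abs_mult by (simp add: mult_left_le)

lemma cos_derivs_0 [simp]: "cos_derivs A 0 x = A * cos x"
  by (simp add: cos_derivs_def)

lemma cos_derivs_2 [simp]: "cos_derivs A 2 x = - A * cos x"
  by (simp add: cos_derivs_def cos_periodic_pi)

lemma has_real_derivative_sinh_derivs:
  "(sinh_derivs k b C n has_real_derivative sinh_derivs k b C (Suc n) p) (at p)"
  unfolding sinh_derivs_def by (cases "even n") (auto intro!: derivative_eq_intros)

lemma sinh_derivs_0 [simp]: "sinh_derivs k b C 0 p = C * sinh (k * (p - b))"
  and sinh_derivs_2 [simp]: "sinh_derivs k b C 2 p = k ^ 2 * sinh_derivs k b C 0 p"
  by (simp_all add: sinh_derivs_def)

definition upper_profile :: "real \<Rightarrow> real \<Rightarrow> nat \<Rightarrow> real \<Rightarrow> real" where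
  "upper_profile Gam p1 = sinh_derivs (1 / Gam) 0 (1 / sinh (p1 / Gam))"

definition lower_profile :: "real \<Rightarrow> real \<Rightarrow> real \<Rightarrow> nat \<Rightarrow> real \<Rightarrow> real" where
  "lower_profile lam p0 p1 = sinh_derivs (1 / lam) p0 (1 / sinh ((p1 - p0) / lam))"

text \<open>The profile W of the kernel mode cos q W(p): W'' = W/\<Gamma>^2 on the upper layer,
  W'' = W/\<lambda>^2 on the lower one, W(0) = W(p0) = 0 and W(p1) = 1; the interface
  condition on W is then exactly the dispersion relation.\<close>

definition kernel_profile :: "real \<Rightarrow> real \<Rightarrow> real \<Rightarrow> real \<Rightarrow> real \<Rightarrow> real" where
  "kernel_profile Gam lam p0 p1 p =
     (if p \<le> p1 then lower_profile lam p0 p1 0 p else upper_profile Gam p1 0 p)"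

definition kernel_mode :: "real \<Rightarrow> real \<Rightarrow> real \<Rightarrow> real \<Rightarrow> real \<times> real \<Rightarrow> real" where
  "kernel_mode Gam lam p0 p1 x = cos (fst x) * kernel_profile Gam lam p0 p1 (snd x)"

lemma has_real_derivative_upper_profile:
  "(upper_profile Gam p1 n has_real_derivative upper_profile Gam p1 (Suc n) p) (at p)"
  unfolding upper_profile_def by (rule has_real_derivative_sinh_derivs)

lemma has_real_derivative_lower_profile:
  "(lower_profile lam p0 p1 n has_real_derivative lower_profile lam p0 p1 (Suc n) p) (at p)"
  unfolding lower_profile_def by (rule has_real_derivative_sinh_derivs)

lemma upper_profile_2: "upper_profile Gam p1 2 p = (1 / Gam)\<^sup>2 * upper_profile Gam p1 0 p"
  and lower_profile_2: "lower_profile lam p0 p1 2 p = (1 / lam)\<^sup>2 * lower_profile lam p0 p1 0 p"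
  by (simp_all only: upper_profile_def lower_profile_def sinh_derivs_2)

lemma upper_profile_top: "upper_profile Gam p1 0 0 = 0"
  and lower_profile_bottom: "lower_profile lam p0 p1 0 p0 = 0"
  by (simp_all add: upper_profile_def lower_profile_def)

lemma upper_profile_interface: "Gam \<noteq> 0 \<Longrightarrow> p1 \<noteq> 0 \<Longrightarrow> upper_profile Gam p1 0 p1 = 1"
  and lower_profile_interface: "lam \<noteq> 0 \<Longrightarrow> p0 \<noteq> p1 \<Longrightarrow> lower_profile lam p0 p1 0 p1 = 1"
  by (simp_all add: upper_profile_def lower_profile_def)

lemma upper_profile_deriv_interface: "upper_profile Gam p1 1 p1 = coth (p1 / Gam) / Gam"
  and lower_profile_deriv_interface: "lower_profile lam p0 p1 1 p1 = coth ((p1 - p0) / lam) / lam"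
  by (simp_all add: upper_profile_def lower_profile_def coth_def sinh_derivs_def)

lemma kernel_mode_lower:
  "y \<in> UNIV \<times> {p0..p1} \<Longrightarrow> kernel_mode Gam lam p0 p1 y = cos (fst y) * lower_profile lam p0 p1 0 (snd y)"
  by (auto simp: kernel_mode_def kernel_profile_def)

context
  fixes Gam lam p0 p1 :: real
  assumes Gam: "Gam > 0" and lam: "lam > 0" and p01: "p0 < p1" and p1: "p1 < 0"
begin

lemma kernel_mode_upper:
  "y \<in> UNIV \<times> {p1..0} \<Longrightarrow> kernel_mode Gam lam p0 p1 y = cos (fst y) * upper_profile Gam p1 0 (snd y)"
  using lower_profile_interface[of lam p0 p1] upper_profile_interface[of Gam p1] Gam lam p01 p1
  by (auto simp: kernel_mode_def kernel_profile_def)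

lemma kernel_mode_in_X:
  assumes a: "0 < a" "a < 1"
  shows "Xsp a p0 p1 (kernel_mode Gam lam p0 p1)"
proof -
  note upper = Cka_separable_product[where u = "cos_derivs 1" and v = "upper_profile Gam p1",
      OF has_real_derivative_cos_derivs has_real_derivative_upper_profile abs_cos_derivs_le,
      where A = p1 and B = 0]
  note lower = Cka_separable_product[where u = "cos_derivs 1" and v = "lower_profile lam p0 p1",
      OF has_real_derivative_cos_derivs has_real_derivative_lower_profile abs_cos_derivs_le,
      where A = p0 and B = p1]
  have "Cka a 2 {p1<..0} (kernel_mode Gam lam p0 p1)" "Cka a 1 {p1..0} (kernel_mode Gam lam p0 p1)"
    using p1 a by (auto intro!: upper simp: trivial_limit_within kernel_mode_upper)
  moreover have "Cka a 2 {p0..<p1} (kernel_mode Gam lam p0 p1)" "Cka a 1 {p0..p1} (kernel_mode Gam lam p0 p1)"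
    using p01 a by (auto intro!: lower simp: trivial_limit_within kernel_mode_lower)
  moreover have "Cka a 0 {p0..0} (kernel_mode Gam lam p0 p1)"
  proof -
    obtain LU where LU: "LU-lipschitz_on {p1..0} (upper_profile Gam p1 0)"
      using lipschitz_on_Icc_if_continuous_derivative[OF has_real_derivative_upper_profile]
      by (meson DERIV_isCont continuous_at_imp_continuous_on has_real_derivative_upper_profile)
    obtain LL where LL: "LL-lipschitz_on {p0..p1} (lower_profile lam p0 p1 0)"
      using lipschitz_on_Icc_if_continuous_derivative[OF has_real_derivative_lower_profile]
      by (meson DERIV_isCont continuous_at_imp_continuous_on has_real_derivative_lower_profile)
    have "(max LL LU)-lipschitz_on {p0..0} (kernel_profile Gam lam p0 p1)"
      using lipschitz_on_concat_max[OF LL LU] lower_profile_interface[of lam p0 p1]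
        upper_profile_interface[of Gam p1] Gam lam p01 p1
      by (simp add: kernel_profile_def[abs_def])
    moreover from lipschitz_on_continuous_on[OF this]
    obtain M where "\<And>p. p \<in> {p0..0} \<Longrightarrow> norm (kernel_profile Gam lam p0 p1 p) \<le> M"
      using continuous_on_compact_bound[OF compact_Icc] by blast
    ultimately have "Cka a 0 {p0..0} (\<lambda>x. cos (fst x) * kernel_profile Gam lam p0 p1 (snd x))"
      using a by (intro Cka_zero_separable_product[OF abs_cos_le_one lipschitz_on_cos]) auto
    then show ?thesis by (simp add: kernel_mode_def[abs_def])
  qed
  moreover have "per_even {p0..0} (kernel_mode Gam lam p0 p1)"
    by (simp add: per_even_def kernel_mode_def)
  moreover have "kernel_mode Gam lam p0 p1 (q, p0) = 0" for q
    using p01 by (simp add: kernel_mode_def kernel_profile_def lower_profile_bottom)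
  ultimately show ?thesis by (simp add: Xsp_def)
qed

lemma kernel_mode_in_kernel:
  assumes dispersion: "g * jrho = Gam\<^sup>2 * coth (p1 / Gam) - lam\<^sup>2 * coth ((p1 - p0) / lam)"
  shows "eqY p0 p1 (Lop g jrho Gam p0 p1 lam (kernel_mode Gam lam p0 p1)) zeroY"
proof -
  let ?\<psi> = "kernel_mode Gam lam p0 p1"
  have upper_layer: "x \<in> UNIV \<times> J \<Longrightarrow> pd J bs ?\<psi> x =
      cos_derivs 1 (count_list bs True) (fst x) * upper_profile Gam p1 (count_list bs False) (snd x)"
    if "J = {p1<..0} \<or> J = {p1..0}" for J bs x
    using that p1
    by (elim disjE; intro pd_separable_product[where u = "cos_derivs 1" and v = "upper_profile Gam p1",
          OF has_real_derivative_cos_derivs has_real_derivative_upper_profile])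
      (auto simp: trivial_limit_within kernel_mode_upper)
  have lower_layer: "x \<in> UNIV \<times> J \<Longrightarrow> pd J bs ?\<psi> x =
      cos_derivs 1 (count_list bs True) (fst x) * lower_profile lam p0 p1 (count_list bs False) (snd x)"
    if "J = {p0..<p1} \<or> J = {p0..p1}" for J bs x
    using that p01
    by (elim disjE; intro pd_separable_product[where u = "cos_derivs 1" and v = "lower_profile lam p0 p1",
          OF has_real_derivative_cos_derivs has_real_derivative_lower_profile])
      (auto simp: trivial_limit_within kernel_mode_lower)
  have interface: "2 * (Gam ^ 3 * pd {p1..0} [False] ?\<psi> (q, p1) - lam ^ 3 * pd {p0..p1} [False] ?\<psi> (q, p1))
      - 2 * g * jrho * ?\<psi> (q, p1) = 0" for q
  proof -
    have upper: "pd {p1..0} [False] ?\<psi> (q, p1) = cos q * (coth (p1 / Gam) / Gam)"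
      using upper_layer[of "{p1..0}" "(q, p1)" "[False]"] p1
      by (simp add: upper_profile_deriv_interface[unfolded One_nat_def])
    have lower: "pd {p0..p1} [False] ?\<psi> (q, p1) = cos q * (coth ((p1 - p0) / lam) / lam)"
      using lower_layer[of "{p0..p1}" "(q, p1)" "[False]"] p01
      by (simp add: lower_profile_deriv_interface[unfolded One_nat_def])
    have psi_p1: "?\<psi> (q, p1) = cos q"
      using kernel_mode_upper[of "(q, p1)"] p1 Gam by (simp add: upper_profile_interface)
    have "2 * (Gam ^ 3 * pd {p1..0} [False] ?\<psi> (q, p1) - lam ^ 3 * pd {p0..p1} [False] ?\<psi> (q, p1))
        - 2 * g * jrho * ?\<psi> (q, p1)
        = 2 * cos q * (Gam ^ 3 * (coth (p1 / Gam) / Gam)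
            - lam ^ 3 * (coth ((p1 - p0) / lam) / lam) - g * jrho)"
      unfolding upper lower psi_p1 by (simp add: algebra_simps)
    also have "\<dots> = 0"
      using Gam lam dispersion by (simp add: power3_eq_cube power2_eq_square)
    finally show ?thesis .
  qed
  have "pd {p1<..0} [False, False] ?\<psi> x + (1 / Gam)\<^sup>2 * pd {p1<..0} [True, True] ?\<psi> x = 0"
    if "x \<in> UNIV \<times> {p1<..0}" for x
    using upper_layer[OF _ that, of "[False, False]"] upper_layer[OF _ that, of "[True, True]"]
    by (simp add: upper_profile_2 numeral_2_eq_2[symmetric])
  moreover have "pd {p0..<p1} [False, False] ?\<psi> x + (1 / lam)\<^sup>2 * pd {p0..<p1} [True, True] ?\<psi> x = 0"
    if "x \<in> UNIV \<times> {p0..<p1}" for x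
    using lower_layer[OF _ that, of "[False, False]"] lower_layer[OF _ that, of "[True, True]"]
    by (simp add: lower_profile_2 numeral_2_eq_2[symmetric])
  moreover have "?\<psi> (q, 0) = 0" for q
    using p1 by (simp add: kernel_mode_def kernel_profile_def upper_profile_top)
  moreover have "dmean p1 ?\<psi> = 0"
    using kernel_mode_upper p1 Gam by (simp add: dmean_def upper_profile_interface)
  ultimately show ?thesis using interface by (simp add: eqY_def Lop_def zeroY_def)
qed

end

lemma kernel_generator_multiple_of_kernel_mode:
  assumes "0 < a" "a < 1" "Gam > 0" "lam > 0" "p0 < p1" "p1 < 0"
    and "g * jrho = Gam\<^sup>2 * coth (p1 / Gam) - lam\<^sup>2 * coth ((p1 - p0) / lam)"
    and "generates_kernel a g jrho Gam p0 p1 lam \<phi>"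
  obtains c where "c \<noteq> 0" "\<And>x. x \<in> UNIV \<times> {p0..0} \<Longrightarrow> kernel_mode Gam lam p0 p1 x = c * \<phi> x"
proof -
  obtain c where c: "\<And>x. x \<in> UNIV \<times> {p0..0} \<Longrightarrow> kernel_mode Gam lam p0 p1 x = c * \<phi> x"
    using assms kernel_mode_in_X kernel_mode_in_kernel unfolding generates_kernel_def by meson
  have "kernel_mode Gam lam p0 p1 (0, p1) = 1"
    using assms by (simp add: kernel_mode_def kernel_profile_def lower_profile_interface)
  then have "c \<noteq> 0" using c[of "(0, p1)"] assms by auto
  then show thesis using c by (rule that)
qed

section \<open>The derivative of L_\<lambda> with respect to \<lambda>\<close>

lemma dLop_eq:
  assumes "lam \<noteq> 0"
  shows "dLop g jrho Gam p0 p1 lam \<phi> =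
    ((\<lambda>_. 0),
     (\<lambda>x. - 2 / lam ^ 3 * pd {p0..<p1} [True, True] \<phi> x),
     (\<lambda>q. - 6 * lam\<^sup>2 * pd {p0..p1} [False] \<phi> (q, p1)),
     (\<lambda>_. 0))"
proof -
  have "deriv (\<lambda>l. A + (1 / l)\<^sup>2 * B) lam = - 2 / lam ^ 3 * B" for A B :: real
    using assms by (intro DERIV_imp_deriv)
      (auto intro!: derivative_eq_intros simp: field_simps power3_eq_cube power2_eq_square)
  moreover have "deriv (\<lambda>l. 2 * (A - l ^ 3 * B) - C) lam = - 6 * lam\<^sup>2 * B" for A B C :: real
    by (intro DERIV_imp_deriv) (auto intro!: derivative_eq_intros simp: power2_eq_square)
  ultimately show ?thesis by (simp add: dLop_def Lop_def)
qed

text \<open>The value of dLop at (1/c) times the kernel mode.\<close>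

definition mode_forcing :: "real \<Rightarrow> real \<Rightarrow> real \<Rightarrow> real \<Rightarrow> Yel" where
  "mode_forcing c lam p0 p1 =
    ((\<lambda>_. 0),
     (\<lambda>x. 2 / (c * lam ^ 3) * cos (fst x) * lower_profile lam p0 p1 0 (snd x)),
     (\<lambda>q. - 6 * lam\<^sup>2 / c * cos q * lower_profile lam p0 p1 1 p1),
     (\<lambda>_. 0))"

lemma eqY_trans: "eqY p0 p1 u v \<Longrightarrow> eqY p0 p1 v w \<Longrightarrow> eqY p0 p1 u w"
  by (simp add: eqY_def)

lemma dLop_multiple_of_kernel_mode:
  assumes "lam > 0" "p0 < p1" "c \<noteq> 0"
    and \<phi>: "\<And>x. x \<in> UNIV \<times> {p0..p1} \<Longrightarrow> kernel_mode Gam lam p0 p1 x = c * \<phi> x"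
  shows "eqY p0 p1 (dLop g jrho Gam p0 p1 lam \<phi>) (mode_forcing c lam p0 p1)"
proof -
  have "\<phi> y = cos_derivs (1 / c) 0 (fst y) * lower_profile lam p0 p1 0 (snd y)"
    if "y \<in> UNIV \<times> {p0..p1}" for y
    using \<phi>[OF that] kernel_mode_lower[OF that] \<open>c \<noteq> 0\<close> by simp
  note derivs = pd_separable_product[where u = "cos_derivs (1 / c)" and v = "lower_profile lam p0 p1",
      OF has_real_derivative_cos_derivs has_real_derivative_lower_profile _ this]
  have "pd {p0..<p1} [True, True] \<phi> x = - (1 / c) * cos (fst x) * lower_profile lam p0 p1 0 (snd x)"
    if "x \<in> UNIV \<times> {p0..<p1}" for x
  proof -
    have "pd {p0..<p1} [True, True] \<phi> x = cos_derivs (1 / c) 2 (fst x) * lower_profile lam p0 p1 0 (snd x)"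
      using derivs[of "{p0..<p1}" x "[True, True]"] that \<open>p0 < p1\<close>
      by (auto simp: trivial_limit_within numeral_2_eq_2)
    then show ?thesis by simp
  qed
  moreover have "pd {p0..p1} [False] \<phi> (q, p1) = cos_derivs (1 / c) 0 q * lower_profile lam p0 p1 1 p1" for q
    using derivs[of "{p0..p1}" "(q, p1)" "[False]"] \<open>p0 < p1\<close> by (auto simp: trivial_limit_within)
  ultimately show ?thesis
    using assms by (simp add: eqY_def dLop_eq mode_forcing_def)
qed

section \<open>Cosine coefficients\<close>

definition cos_coeff :: "(real \<times> real \<Rightarrow> real) \<Rightarrow> real \<Rightarrow> real" where
  "cos_coeff f p = integral {-pi..pi} (\<lambda>t. f (t, p) * cos t)"

lemma continuous_on_slice:
  "continuous_on (UNIV \<times> J) f \<Longrightarrow> p \<in> J \<Longrightarrow> continuous_on S (\<lambda>t. f (t, p))"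
  by (rule continuous_on_compose2[of "UNIV \<times> J" f]) (auto intro!: continuous_intros)

lemma has_integral_cos_coeff:
  assumes "continuous_on (UNIV \<times> J) f" "p \<in> J"
  shows "((\<lambda>t. f (t, p) * cos t) has_integral cos_coeff f p) {-pi..pi}"
  unfolding cos_coeff_def
  by (intro integrable_integral integrable_continuous_interval continuous_on_mult
      continuous_on_slice[OF assms] continuous_intros)

lemma continuous_on_swap_times_cos:
  fixes f :: "real \<times> real \<Rightarrow> real"
  assumes "continuous_on (UNIV \<times> J) f" "U \<subseteq> J"
  shows "continuous_on (U \<times> cbox (-pi) pi) (\<lambda>(x, t). f (t, x) * cos t)"
proof -
  have "continuous_on (U \<times> cbox (-pi) pi) (\<lambda>y. f (snd y, fst y) * cos (snd y))"
  proof (rule continuous_on_mult)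
    show "continuous_on (U \<times> cbox (- pi) pi) (\<lambda>y. f (snd y, fst y))"
      by (rule continuous_on_compose2[OF assms(1)]) (use assms(2) in \<open>auto intro!: continuous_intros\<close>)
    show "continuous_on (U \<times> cbox (-pi) pi) (\<lambda>x. cos (snd x))"
      by (rule continuous_on_cos, rule continuous_on_snd, rule continuous_on_id)
  qed
  then show ?thesis by (simp add: split_beta)
qed

lemma continuous_on_cos_coeff:
  assumes "continuous_on (UNIV \<times> J) f"
  shows "continuous_on J (cos_coeff f)"
  using integral_continuous_on_param[OF continuous_on_swap_times_cos[OF assms order_refl]]
  by (simp add: cos_coeff_def)

lemma has_integral_cos_squared: "((\<lambda>t. cos t * cos t) has_integral pi) {-pi..pi}"
proof -
  have "((\<lambda>t. 1 / 2 + 1 / 2 * cos (real_of_int 2 * t)) has_integral 1 / 2 * (2 * pi) + 1 / 2 * 0) {-pi..pi}"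
    using has_integral_const_real[of "1 / 2 :: real" "-pi" pi] has_integral_cos_nx[of 2]
    by (intro has_integral_add has_integral_mult_right) auto
  moreover have "1 / 2 + 1 / 2 * cos (real_of_int 2 * t) = cos t * cos t" for t
    using cos_double_cos[of t] by (simp add: power2_eq_square field_simps)
  ultimately show ?thesis by simp
qed

lemma deriv_periodic_endpoints:
  assumes periodic: "\<And>t. f (t + 2 * pi) = f t" and f': "\<And>t. (f has_real_derivative f' t) (at t)"
  shows "f' pi = f' (-pi)"
proof -
  have "(f has_real_derivative f' pi) (at (-pi + 2 * pi))" using f'[of pi] by simp
  then have "((\<lambda>x. f (x + 2 * pi)) has_real_derivative f' pi) (at (-pi))" by (simp only: DERIV_shift)
  then have "(f has_real_derivative f' pi) (at (-pi))" by (simp add: periodic)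
  then show ?thesis using f'[of "-pi"] DERIV_unique by blast
qed

text \<open>Integrating by parts twice against cos, whose boundary terms cancel by periodicity.\<close>

lemma integral_second_deriv_times_cos:
  fixes f f' f'' :: "real \<Rightarrow> real"
  assumes f': "\<And>t. (f has_real_derivative f' t) (at t)"
    and f'': "\<And>t. (f' has_real_derivative f'' t) (at t)"
    and "continuous_on {-pi..pi} f''" and "f' pi = f' (-pi)"
  shows "integral {-pi..pi} (\<lambda>t. f'' t * cos t) = - integral {-pi..pi} (\<lambda>t. f t * cos t)"
proof -
  define G where "G t = f' t * cos t + f t * sin t" for t
  have "((\<lambda>t. f'' t * cos t + f t * cos t) has_integral G pi - G (-pi)) {-pi..pi}"
  proof (rule fundamental_theorem_of_calculus)
    fix t assume "t \<in> {-pi..pi}"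
    have "(G has_real_derivative f'' t * cos t + f t * cos t) (at t)"
      unfolding G_def[abs_def] by (rule derivative_eq_intros f' f'' refl | simp add: algebra_simps)+
    then show "(G has_vector_derivative f'' t * cos t + f t * cos t) (at t within {-pi..pi})"
      by (simp add: has_real_derivative_iff_has_vector_derivative[symmetric] has_field_derivative_at_within)
  qed simp
  moreover have "G pi - G (-pi) = 0" using assms(4) by (simp add: G_def)
  moreover have "continuous_on {-pi..pi} f"
    using f' by (meson DERIV_isCont continuous_at_imp_continuous_on)
  ultimately show ?thesis
    using assms(3) integral_add[of "\<lambda>t. f'' t * cos t" "{-pi..pi}" "\<lambda>t. f t * cos t"]
    by (simp add: integral_unique integrable_continuous_interval continuous_on_mult continuous_intros)
qed

lemma cos_coeff_pd_qq:
  assumes C: "Cka a 2 J \<psi>" and "per_even {p0..0} \<psi>" and p: "p \<in> J" "J \<subseteq> {p0..0}"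
  shows "cos_coeff (pd J [True, True] \<psi>) p = - cos_coeff \<psi> p"
proof -
  have d1: "((\<lambda>s. \<psi> (s, p)) has_real_derivative pd J [True] \<psi> (t, p)) (at t)" for t
    using Cka_has_real_derivative_q[OF C _ p(1), of "[]"] by simp
  have d2: "((\<lambda>s. pd J [True] \<psi> (s, p)) has_real_derivative pd J [True, True] \<psi> (t, p)) (at t)" for t
    by (rule Cka_has_real_derivative_q[OF C _ p(1)]) simp
  have "continuous_on {-pi..pi} (\<lambda>t. pd J [True, True] \<psi> (t, p))"
    using Cka_continuous_onD[OF C, of "[True, True]"] p(1) by (simp add: continuous_on_slice)
  moreover have "\<psi> (t + 2 * pi, p) = \<psi> (t, p)" for t
    using assms(2) p unfolding per_even_def by auto
  ultimately show ?thesis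
    unfolding cos_coeff_def
    by (intro integral_second_deriv_times_cos[OF d1 d2] deriv_periodic_endpoints[OF _ d1])
qed

lemma has_real_derivative_cos_coeff:
  assumes f': "\<And>t x. x \<in> {A<..<B} \<Longrightarrow> ((\<lambda>s. f (t, s)) has_real_derivative f' (t, x)) (at x)"
    and f_cont: "continuous_on (UNIV \<times> J) f" "{A<..<B} \<subseteq> J"
    and f'_cont: "continuous_on (UNIV \<times> J') f'" "{A<..<B} \<subseteq> J'"
    and p: "p \<in> {A<..<B}"
  shows "(cos_coeff f has_real_derivative cos_coeff f' p) (at p)"
proof -
  have "((\<lambda>x. integral (cbox (-pi) pi) (\<lambda>t. f (t, x) * cos t)) has_field_derivative
      integral (cbox (-pi) pi) (\<lambda>t. f' (t, p) * cos t)) (at p within {A<..<B})"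
  proof (rule leibniz_rule_field_derivative[where f = "\<lambda>x t. f (t, x) * cos t", OF _ _ _ p])
    show "((\<lambda>x. f (t, x) * cos t) has_field_derivative f' (t, x) * cos t) (at x within {A<..<B})"
      if "x \<in> {A<..<B}" for x t
      using DERIV_cmult_right[OF f'[OF that]] by (rule has_field_derivative_at_within)
    show "(\<lambda>t. f (t, x) * cos t) integrable_on cbox (-pi) pi" if "x \<in> {A<..<B}" for x
    proof -
      have "continuous_on (cbox (-pi) pi) (\<lambda>t. f (t, x))"
        using that f_cont(2) by (intro continuous_on_slice[OF f_cont(1)]) auto
      then show ?thesis by (intro integrable_continuous continuous_on_mult continuous_intros)
    qed
    show "continuous_on ({A<..<B} \<times> cbox (-pi) pi) (\<lambda>(x, t). f' (t, x) * cos t)"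
      by (rule continuous_on_swap_times_cos[OF f'_cont])
  qed simp
  then show ?thesis
    unfolding at_within_open[OF p open_greaterThanLessThan] cbox_interval cos_coeff_def[abs_def] .
qed

lemma has_real_derivative_cos_coeff_Cka:
  assumes C: "Cka a 1 J \<psi>" and I: "{A<..<B} \<subseteq> J" and p: "p \<in> {A<..<B}"
  shows "(cos_coeff \<psi> has_real_derivative cos_coeff (pd J [False] \<psi>) p) (at p)"
  using Cka_has_real_derivative_p[OF C, of "[]"] I Cka_continuous_onD[OF C, of "[]"]
    Cka_continuous_onD[OF C, of "[False]"]
  by (intro has_real_derivative_cos_coeff[OF _ _ I _ I p]) auto

lemma cos_coeff_layer_ode:
  assumes C2: "Cka a 2 J' \<psi>" and C1: "Cka a 1 J \<psi>" and "per_even {p0..0} \<psi>" and "J' \<subseteq> {p0..0}"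
    and I: "{A<..<B} \<subseteq> J" "{A<..<B} \<subseteq> J'" and p: "p \<in> {A<..<B}"
    and layer: "\<And>x. x \<in> UNIV \<times> J' \<Longrightarrow>
      pd J' [False, False] \<psi> x + k\<^sup>2 * pd J' [True, True] \<psi> x = cos (fst x) * F (snd x)"
  shows "(cos_coeff (pd J [False] \<psi>) has_real_derivative k\<^sup>2 * cos_coeff \<psi> p + pi * F p) (at p)"
proof -
  have "p \<in> J'" using I p by auto
  have "(cos_coeff (pd J [False] \<psi>) has_real_derivative cos_coeff (pd J' [False, False] \<psi>) p) (at p)"
  proof (rule has_real_derivative_cos_coeff[OF _ _ I(1) _ I(2) p])
    show "((\<lambda>s. pd J [False] \<psi> (t, s)) has_real_derivative pd J' [False, False] \<psi> (t, x)) (at x)"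
      if "x \<in> {A<..<B}" for t x
    proof (rule has_field_derivative_transform_within_open[OF _ open_greaterThanLessThan that])
      show "((\<lambda>s. pd J' [False] \<psi> (t, s)) has_real_derivative pd J' [False, False] \<psi> (t, x)) (at x)"
        by (rule Cka_has_real_derivative_p[OF C2 _ that I(2)]) simp
    qed (use pd_p_interior_eq[OF _ I] in auto)
    show "continuous_on (UNIV \<times> J) (pd J [False] \<psi>)" by (rule Cka_continuous_onD[OF C1]) simp
    show "continuous_on (UNIV \<times> J') (pd J' [False, False] \<psi>)" by (rule Cka_continuous_onD[OF C2]) simp
  qed
  moreover have "((\<lambda>t. pd J' [False, False] \<psi> (t, p) * cos t) has_integral
      F p * pi - k\<^sup>2 * cos_coeff (pd J' [True, True] \<psi>) p) {-pi..pi}"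
  proof -
    have "pd J' [False, False] \<psi> (t, p) * cos t
        = F p * (cos t * cos t) - k\<^sup>2 * (pd J' [True, True] \<psi> (t, p) * cos t)" for t
    proof -
      have "pd J' [False, False] \<psi> (t, p) * cos t
          = (pd J' [False, False] \<psi> (t, p) + k\<^sup>2 * pd J' [True, True] \<psi> (t, p)) * cos t
            - k\<^sup>2 * (pd J' [True, True] \<psi> (t, p) * cos t)"
        by (simp add: algebra_simps)
      moreover have "pd J' [False, False] \<psi> (t, p) + k\<^sup>2 * pd J' [True, True] \<psi> (t, p) = cos t * F p"
        using layer[of "(t, p)"] \<open>p \<in> J'\<close> by fastforce
      ultimately show ?thesis by (simp only:) (simp add: algebra_simps)
    qed
    moreover have "continuous_on (UNIV \<times> J') (pd J' [True, True] \<psi>)"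
      by (rule Cka_continuous_onD[OF C2]) simp
    ultimately show ?thesis
      using has_integral_diff[OF has_integral_mult_right[OF has_integral_cos_squared]
          has_integral_mult_right[OF has_integral_cos_coeff]] \<open>p \<in> J'\<close> by simp
  qed
  then have "cos_coeff (pd J' [False, False] \<psi>) p = F p * pi - k\<^sup>2 * cos_coeff (pd J' [True, True] \<psi>) p"
    by (simp add: cos_coeff_def integral_unique)
  ultimately show ?thesis
    using cos_coeff_pd_qq[OF C2 assms(3) \<open>p \<in> J'\<close> assms(4)] by (simp add: algebra_simps)
qed
lemma cos_coeff_interface_identity:
  assumes "continuous_on (UNIV \<times> J1) f1" "continuous_on (UNIV \<times> J2) f2" "continuous_on (UNIV \<times> J0) f0"
    and "p \<in> J1" "p \<in> J2" "p \<in> J0"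
    and identity: "\<And>t. 2 * (\<alpha> * f1 (t, p) - \<beta> * f2 (t, p)) - \<gamma> * f0 (t, p) = K * cos t"
  shows "2 * (\<alpha> * cos_coeff f1 p - \<beta> * cos_coeff f2 p) - \<gamma> * cos_coeff f0 p = K * pi"
proof -
  have "((\<lambda>t. 2 * (\<alpha> * (f1 (t, p) * cos t) - \<beta> * (f2 (t, p) * cos t)) - \<gamma> * (f0 (t, p) * cos t)) has_integral
      2 * (\<alpha> * cos_coeff f1 p - \<beta> * cos_coeff f2 p) - \<gamma> * cos_coeff f0 p) {-pi..pi}"
    using assms(1-6) by (intro has_integral_diff has_integral_mult_right has_integral_cos_coeff)
  moreover have "2 * (\<alpha> * (f1 (t, p) * cos t) - \<beta> * (f2 (t, p) * cos t)) - \<gamma> * (f0 (t, p) * cos t)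
      = K * (cos t * cos t)" for t
    using arg_cong[OF identity[of t], of "\<lambda>y. y * cos t"] by (simp add: algebra_simps)
  ultimately show ?thesis
    using has_integral_mult_right[OF has_integral_cos_squared, of K] has_integral_unique by auto
qed

section \<open>First integrals and the interface balance\<close>

lemma wronskian_conserved:
  fixes H D V V' S :: "real \<Rightarrow> real"
  assumes "A < B" and cont: "continuous_on {A..B} H" "continuous_on {A..B} D" "continuous_on {A..B} S"
    and H': "\<And>p. p \<in> {A<..<B} \<Longrightarrow> (H has_real_derivative D p) (at p)"
    and D': "\<And>p. p \<in> {A<..<B} \<Longrightarrow> (D has_real_derivative k\<^sup>2 * H p + \<kappa> * V p) (at p)"
    and V': "\<And>p. (V has_real_derivative V' p) (at p)"
    and V'': "\<And>p. (V' has_real_derivative k\<^sup>2 * V p) (at p)"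
    and S': "\<And>p. p \<in> {A<..<B} \<Longrightarrow> (S has_real_derivative \<kappa> * (V p * V p)) (at p)"
  shows "D B * V B - H B * V' B - S B = D A * V A - H A * V' A - S A"
proof -
  define W where "W p = D p * V p - H p * V' p - S p" for p
  have "continuous_on {A..B} V" "continuous_on {A..B} V'"
    using V' V'' by (meson DERIV_isCont continuous_at_imp_continuous_on)+
  then have "continuous_on {A..B} W"
    unfolding W_def[abs_def] using cont by (intro continuous_intros)
  moreover have "(W has_real_derivative 0) (at p)" if "A < p" "p < B" for p
  proof -
    have "(W has_real_derivative (k\<^sup>2 * H p + \<kappa> * V p) * V p + V' p * D p
        - (D p * V' p + k\<^sup>2 * V p * H p) - \<kappa> * (V p * V p)) (at p)"
      unfolding W_def[abs_def] using that by (intro DERIV_diff DERIV_mult H' D' V' V'' S') auto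
    then show ?thesis by (simp add: algebra_simps)
  qed
  ultimately have "W B = W A" by (rule DERIV_isconst_end[OF \<open>A < B\<close>])
  then show ?thesis by (simp add: W_def)
qed

definition lower_profile_sq_primitive :: "real \<Rightarrow> real \<Rightarrow> real \<Rightarrow> real \<Rightarrow> real" where
  "lower_profile_sq_primitive lam p0 p1 p =
     (sinh ((p - p0) / lam) * cosh ((p - p0) / lam) * lam - (p - p0)) / (2 * (sinh ((p1 - p0) / lam))\<^sup>2)"

lemma has_real_derivative_lower_profile_sq_primitive:
  assumes "lam \<noteq> 0"
  shows "(lower_profile_sq_primitive lam p0 p1 has_real_derivative
      lower_profile lam p0 p1 0 p * lower_profile lam p0 p1 0 p) (at p)"
proof -
  let ?u = "(p - p0) / lam" and ?s = "sinh ((p1 - p0) / lam)"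
  have "((\<lambda>p. sinh ((p - p0) / lam) * cosh ((p - p0) / lam) * lam - (p - p0)) has_real_derivative
      (cosh ?u * (1 / lam) * cosh ?u + sinh ?u * (sinh ?u * (1 / lam))) * lam - 1) (at p)"
    using assms by (auto intro!: derivative_eq_intros)
  then have "(lower_profile_sq_primitive lam p0 p1 has_real_derivative
      ((cosh ?u * (1 / lam) * cosh ?u + sinh ?u * (sinh ?u * (1 / lam))) * lam - 1) / (2 * ?s\<^sup>2)) (at p)"
    unfolding lower_profile_sq_primitive_def[abs_def] by (rule DERIV_cdivide)
  moreover have "((cosh ?u * (1 / lam) * cosh ?u + sinh ?u * (sinh ?u * (1 / lam))) * lam - 1) / (2 * ?s\<^sup>2)
      = lower_profile lam p0 p1 0 p * lower_profile lam p0 p1 0 p"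
    using assms cosh_square_eq[of ?u] by (simp add: lower_profile_def power2_eq_square field_simps)
  ultimately show ?thesis by simp
qed

lemma upper_first_integral:
  fixes H D :: "real \<Rightarrow> real"
  assumes "Gam > 0" "p1 < 0" "continuous_on {p1..0} H" "continuous_on {p1..0} D"
    and "\<And>p. p \<in> {p1<..<0} \<Longrightarrow> (H has_real_derivative D p) (at p)"
    and "\<And>p. p \<in> {p1<..<0} \<Longrightarrow> (D has_real_derivative (1 / Gam)\<^sup>2 * H p) (at p)"
    and "H 0 = 0"
  shows "D p1 = H p1 * (coth (p1 / Gam) / Gam)"
proof -
  have "D 0 * upper_profile Gam p1 0 0 - H 0 * upper_profile Gam p1 1 0 - 0
      = D p1 * upper_profile Gam p1 0 p1 - H p1 * upper_profile Gam p1 1 p1 - 0"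
  proof (rule wronskian_conserved[where k = "1 / Gam" and \<kappa> = 0, OF assms(2-4) _ assms(5)])
    show "(upper_profile Gam p1 1 has_real_derivative (1 / Gam)\<^sup>2 * upper_profile Gam p1 0 p) (at p)" for p
      using has_real_derivative_upper_profile[of Gam p1 1 p]
      by (simp add: upper_profile_2 numeral_2_eq_2[symmetric])
  qed (use assms(6) in \<open>auto intro: has_real_derivative_upper_profile[of Gam p1 0, simplified]\<close>)
  then show ?thesis
    using assms upper_profile_interface[of Gam p1]
    by (simp add: upper_profile_top upper_profile_deriv_interface[unfolded One_nat_def])
qed

lemma lower_first_integral:
  fixes H D :: "real \<Rightarrow> real"
  assumes "lam > 0" "p0 < p1" "continuous_on {p0..p1} H" "continuous_on {p0..p1} D"
    and "\<And>p. p \<in> {p0<..<p1} \<Longrightarrow> (H has_real_derivative D p) (at p)"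
    and "\<And>p. p \<in> {p0<..<p1} \<Longrightarrow>
      (D has_real_derivative (1 / lam)\<^sup>2 * H p + \<kappa> * lower_profile lam p0 p1 0 p) (at p)"
    and "H p0 = 0"
  shows "D p1 = H p1 * (coth ((p1 - p0) / lam) / lam) + \<kappa> * lower_profile_sq_primitive lam p0 p1 p1"
proof -
  let ?V = "lower_profile lam p0 p1" and ?S = "\<lambda>p. \<kappa> * lower_profile_sq_primitive lam p0 p1 p"
  have "D p1 * ?V 0 p1 - H p1 * ?V 1 p1 - ?S p1 = D p0 * ?V 0 p0 - H p0 * ?V 1 p0 - ?S p0"
  proof (rule wronskian_conserved[where k = "1 / lam", OF assms(2-4) _ assms(5,6)])
    show "continuous_on {p0..p1} ?S"
      using has_real_derivative_lower_profile_sq_primitive[of lam p0 p1] \<open>lam > 0\<close>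
      by (intro continuous_intros continuous_at_imp_continuous_on ballI DERIV_isCont) auto
    show "(?V 1 has_real_derivative (1 / lam)\<^sup>2 * ?V 0 p) (at p)" for p
      using has_real_derivative_lower_profile[of lam p0 p1 1 p]
      by (simp add: lower_profile_2 numeral_2_eq_2[symmetric])
    show "(?S has_real_derivative \<kappa> * (?V 0 p * ?V 0 p)) (at p)" for p
      using has_real_derivative_lower_profile_sq_primitive \<open>lam > 0\<close> by (simp add: DERIV_cmult)
  qed (auto intro: has_real_derivative_lower_profile[of lam p0 p1 0, simplified])
  then show ?thesis
    using assms lower_profile_interface[of lam p0 p1]
    by (simp add: lower_profile_bottom lower_profile_deriv_interface[unfolded One_nat_def]
        lower_profile_sq_primitive_def)
qed

text \<open>Here h, D1, D2 are the cosine coefficients at p1 of \<psi> and of its upper and lower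
  p-derivatives, s = sinh(d/L), C = cosh(d/L) and d = p1 - p0.\<close>

lemma interface_balance_impossible:
  fixes h D1 D2 G L c coth1 s C d g j :: real
  assumes "G > 0" "L > 0" "c \<noteq> 0" "s > 0" "C > 0" "d > 0"
    and upper: "D1 = h * (coth1 / G)"
    and lower: "D2 = h * ((C / s) / L) + 2 * pi / (c * L ^ 3) * ((L * s * C - d) / (2 * s\<^sup>2))"
    and interface: "2 * (G ^ 3 * D1 - L ^ 3 * D2) - 2 * g * j * h = - 6 * L\<^sup>2 / c * ((C / s) / L) * pi"
    and dispersion: "g * j = G\<^sup>2 * coth1 - L\<^sup>2 * (C / s)"
  shows False
proof -
  define X where "X = (L * s * C - d) / s\<^sup>2"
  have "G ^ 3 * D1 = G\<^sup>2 * h * coth1"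
    using upper \<open>G > 0\<close> by (simp add: power2_eq_square power3_eq_cube)
  moreover have "L ^ 3 * D2 = L\<^sup>2 * h * (C / s) + pi / c * X"
    unfolding lower X_def using \<open>L > 0\<close> \<open>c \<noteq> 0\<close> \<open>s > 0\<close>
    by (simp add: power2_eq_square power3_eq_cube field_simps)
  ultimately have "2 * (G ^ 3 * D1 - L ^ 3 * D2) - 2 * g * j * h = - 2 * (pi / c) * X"
    unfolding mult.assoc[of 2 g] dispersion by (simp add: algebra_simps)
  then have "- 2 * (pi / c) * X = - 6 * L\<^sup>2 / c * ((C / s) / L) * pi" unfolding interface ..
  then have "X = 3 * (L * (C / s))"
    using \<open>c \<noteq> 0\<close> \<open>s > 0\<close> \<open>L > 0\<close> by (simp add: field_simps power2_eq_square)
  then have "(d + 2 * L * C * s) * s = 0"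
    unfolding X_def using \<open>s > 0\<close> by (simp add: field_simps power2_eq_square)
  moreover have "d + 2 * L * C * s > 0" using assms(2,4-6) by (simp add: add_pos_pos)
  ultimately show False using \<open>s > 0\<close> by simp
qed

lemma cos_coeff_upper_first_integral:
  assumes Gam: "Gam > 0" and p01: "p0 < p1" and p1: "p1 < 0" and X: "Xsp a p0 p1 \<psi>"
    and layer: "\<And>x. x \<in> UNIV \<times> {p1<..0} \<Longrightarrow>
      pd {p1<..0} [False, False] \<psi> x + (1 / Gam)\<^sup>2 * pd {p1<..0} [True, True] \<psi> x = cos (fst x) * 0"
    and top: "\<And>q. \<psi> (q, 0) = dmean p1 \<psi>"
  shows "cos_coeff (pd {p1..0} [False] \<psi>) p1 = cos_coeff \<psi> p1 * (coth (p1 / Gam) / Gam)"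
proof (rule upper_first_integral[where H = "cos_coeff \<psi>" and D = "cos_coeff (pd {p1..0} [False] \<psi>)",
      OF Gam p1])
  have C2: "Cka a 2 {p1<..0} \<psi>" and C1: "Cka a 1 {p1..0} \<psi>" and C0: "Cka a 0 {p0..0} \<psi>"
    and "per_even {p0..0} \<psi>"
    using X by (auto simp: Xsp_def)
  show "continuous_on {p1..0} (cos_coeff \<psi>)"
    using Cka_continuous_onD[OF C0, of "[]"] p01
    by (intro continuous_on_subset[OF continuous_on_cos_coeff]) auto
  show "continuous_on {p1..0} (cos_coeff (pd {p1..0} [False] \<psi>))"
    by (rule continuous_on_cos_coeff[OF Cka_continuous_onD[OF C1]]) simp
  show "(cos_coeff \<psi> has_real_derivative cos_coeff (pd {p1..0} [False] \<psi>) p) (at p)"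
    if "p \<in> {p1<..<0}" for p
    by (rule has_real_derivative_cos_coeff_Cka[OF C1 _ that]) auto
  show "(cos_coeff (pd {p1..0} [False] \<psi>) has_real_derivative (1 / Gam)\<^sup>2 * cos_coeff \<psi> p) (at p)"
    if "p \<in> {p1<..<0}" for p
  proof -
    have "{p1<..0} \<subseteq> {p0..0}" "{p1<..<0} \<subseteq> {p1..0}" "{p1<..<0} \<subseteq> {p1<..0}" using p01 by auto
    from cos_coeff_layer_ode[OF C2 C1 \<open>per_even _ _\<close> this that layer] show ?thesis by simp
  qed
  show "cos_coeff \<psi> 0 = 0" using top by (simp add: cos_coeff_def)
qed

lemma cos_coeff_lower_first_integral:
  assumes lam: "lam > 0" and p01: "p0 < p1" and p1: "p1 < 0" and X: "Xsp a p0 p1 \<psi>"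
    and layer: "\<And>x. x \<in> UNIV \<times> {p0..<p1} \<Longrightarrow>
      pd {p0..<p1} [False, False] \<psi> x + (1 / lam)\<^sup>2 * pd {p0..<p1} [True, True] \<psi> x
        = cos (fst x) * (\<beta> * lower_profile lam p0 p1 0 (snd x))"
  shows "cos_coeff (pd {p0..p1} [False] \<psi>) p1 = cos_coeff \<psi> p1 * (coth ((p1 - p0) / lam) / lam)
      + pi * \<beta> * lower_profile_sq_primitive lam p0 p1 p1"
proof (rule lower_first_integral[where H = "cos_coeff \<psi>" and D = "cos_coeff (pd {p0..p1} [False] \<psi>)",
      OF lam p01])
  have C2: "Cka a 2 {p0..<p1} \<psi>" and C1: "Cka a 1 {p0..p1} \<psi>" and C0: "Cka a 0 {p0..0} \<psi>"
    and "per_even {p0..0} \<psi>" and bottom: "\<And>q. \<psi> (q, p0) = 0"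
    using X by (auto simp: Xsp_def)
  show "continuous_on {p0..p1} (cos_coeff \<psi>)"
    using Cka_continuous_onD[OF C0, of "[]"] p1
    by (intro continuous_on_subset[OF continuous_on_cos_coeff]) auto
  show "continuous_on {p0..p1} (cos_coeff (pd {p0..p1} [False] \<psi>))"
    by (rule continuous_on_cos_coeff[OF Cka_continuous_onD[OF C1]]) simp
  show "(cos_coeff \<psi> has_real_derivative cos_coeff (pd {p0..p1} [False] \<psi>) p) (at p)"
    if "p \<in> {p0<..<p1}" for p
    by (rule has_real_derivative_cos_coeff_Cka[OF C1 _ that]) auto
  show "(cos_coeff (pd {p0..p1} [False] \<psi>) has_real_derivative
      (1 / lam)\<^sup>2 * cos_coeff \<psi> p + pi * \<beta> * lower_profile lam p0 p1 0 p) (at p)"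
    if "p \<in> {p0<..<p1}" for p
  proof -
    have "{p0..<p1} \<subseteq> {p0..0}" "{p0<..<p1} \<subseteq> {p0..p1}" "{p0<..<p1} \<subseteq> {p0..<p1}" using p1 by auto
    from cos_coeff_layer_ode[OF C2 C1 \<open>per_even _ _\<close> this that layer]
    show ?thesis by (simp add: mult.assoc)
  qed
  show "cos_coeff \<psi> p0 = 0" using bottom by (simp add: cos_coeff_def)
qed

lemma Lop_ne_mode_forcing:
  assumes Gam: "Gam > 0" and lam: "lam > 0" and p01: "p0 < p1" and p1: "p1 < 0" and "c \<noteq> 0"
    and dispersion: "g * jrho = Gam\<^sup>2 * coth (p1 / Gam) - lam\<^sup>2 * coth ((p1 - p0) / lam)"
    and X: "Xsp a p0 p1 \<psi>"
  shows "\<not> eqY p0 p1 (Lop g jrho Gam p0 p1 lam \<psi>) (mode_forcing c lam p0 p1)"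
proof
  assume "eqY p0 p1 (Lop g jrho Gam p0 p1 lam \<psi>) (mode_forcing c lam p0 p1)"
  then have upper_layer: "\<And>x. x \<in> UNIV \<times> {p1<..0} \<Longrightarrow>
      pd {p1<..0} [False, False] \<psi> x + (1 / Gam)\<^sup>2 * pd {p1<..0} [True, True] \<psi> x = cos (fst x) * 0"
    and lower_layer: "\<And>x. x \<in> UNIV \<times> {p0..<p1} \<Longrightarrow>
      pd {p0..<p1} [False, False] \<psi> x + (1 / lam)\<^sup>2 * pd {p0..<p1} [True, True] \<psi> x
        = cos (fst x) * (2 / (c * lam ^ 3) * lower_profile lam p0 p1 0 (snd x))"
    and interface: "\<And>q. 2 * (Gam ^ 3 * pd {p1..0} [False] \<psi> (q, p1)
          - lam ^ 3 * pd {p0..p1} [False] \<psi> (q, p1))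
        - 2 * g * jrho * \<psi> (q, p1) = (- 6 * lam\<^sup>2 / c * lower_profile lam p0 p1 1 p1) * cos q"
    and top: "\<And>q. \<psi> (q, 0) = dmean p1 \<psi>"
    by (auto simp: eqY_def Lop_def mode_forcing_def)
  have C1: "Cka a 1 {p1..0} \<psi>" "Cka a 1 {p0..p1} \<psi>" and C0: "Cka a 0 {p0..0} \<psi>"
    using X by (auto simp: Xsp_def)
  have "continuous_on (UNIV \<times> {p1..0}) (pd {p1..0} [False] \<psi>)"
    "continuous_on (UNIV \<times> {p0..p1}) (pd {p0..p1} [False] \<psi>)" "continuous_on (UNIV \<times> {p0..0}) (pd {p0..0} [] \<psi>)"
    by (rule Cka_continuous_onD[OF C1(1)] Cka_continuous_onD[OF C1(2)] Cka_continuous_onD[OF C0]; simp)+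
  then have "2 * (Gam ^ 3 * cos_coeff (pd {p1..0} [False] \<psi>) p1 - lam ^ 3 * cos_coeff (pd {p0..p1} [False] \<psi>) p1)
      - 2 * g * jrho * cos_coeff \<psi> p1 = - 6 * lam\<^sup>2 / c * lower_profile lam p0 p1 1 p1 * pi"
    using p01 p1 by (intro cos_coeff_interface_identity[OF _ _ _ _ _ _ interface]) auto
  moreover define sh ch where "sh = sinh ((p1 - p0) / lam)" and "ch = cosh ((p1 - p0) / lam)"
  moreover have "coth ((p1 - p0) / lam) = ch / sh" by (simp add: coth_def sh_def ch_def)
  moreover have "lower_profile lam p0 p1 1 p1 = (ch / sh) / lam"
    unfolding lower_profile_deriv_interface coth_def sh_def ch_def ..
  moreover have "lower_profile_sq_primitive lam p0 p1 p1 = (lam * sh * ch - (p1 - p0)) / (2 * sh\<^sup>2)"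
    by (simp add: lower_profile_sq_primitive_def sh_def ch_def algebra_simps)
  moreover have "sh > 0" "ch > 0" "p1 - p0 > 0" using lam p01 by (simp_all add: sh_def ch_def)
  moreover have "pi * (2 / (c * lam ^ 3)) = 2 * pi / (c * lam ^ 3)" by simp
  ultimately show False
    using interface_balance_impossible[OF Gam lam \<open>c \<noteq> 0\<close>, of sh ch "p1 - p0"]
      cos_coeff_upper_first_integral[OF Gam p01 p1 X upper_layer top]
      cos_coeff_lower_first_integral[OF lam p01 p1 X lower_layer] dispersion
    by (metis (no_types, lifting))
qed

theorem lemma3p7:
  fixes a g l p0 p1 jrho Gam lamstar :: real
    and phistar :: "real \<times> real \<Rightarrow> real"
  assumes "0 < a" and "a < 1"
    and "g > 0" and "l > 0" and "p0 < p1" and "p1 < 0" and "jrho < 0" and "Gam > 0"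
    and "\<bar>p1\<bar> = Gam * l"
    and "g * jrho - Gam^2 * coth (p1 / Gam) < 0"
    and "lamstar > 0"
    and "g * jrho = Gam^2 * coth (p1 / Gam) - lamstar^2 * coth ((p1 - p0) / lamstar)"
    and "\<forall>lam>0. g * jrho = Gam^2 * coth (p1 / Gam) - lam^2 * coth ((p1 - p0) / lam) \<longrightarrow> lam = lamstar"
    and "generates_kernel a g jrho Gam p0 p1 lamstar phistar"
  shows "\<not> in_range a g jrho Gam p0 p1 lamstar (dLop g jrho Gam p0 p1 lamstar phistar)"
proof
  assume "in_range a g jrho Gam p0 p1 lamstar (dLop g jrho Gam p0 p1 lamstar phistar)"
  then obtain \<psi> where "Xsp a p0 p1 \<psi>"
    and \<psi>: "eqY p0 p1 (Lop g jrho Gam p0 p1 lamstar \<psi>) (dLop g jrho Gam p0 p1 lamstar phistar)"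
    unfolding in_range_def by blast
  obtain c where "c \<noteq> 0" and c: "\<And>x. x \<in> UNIV \<times> {p0..0} \<Longrightarrow> kernel_mode Gam lamstar p0 p1 x = c * phistar x"
    using kernel_generator_multiple_of_kernel_mode[OF assms(1,2,8,11,5,6,12,14)] by blast
  have "eqY p0 p1 (dLop g jrho Gam p0 p1 lamstar phistar) (mode_forcing c lamstar p0 p1)"
    using \<open>lamstar > 0\<close> \<open>p0 < p1\<close> \<open>p1 < 0\<close> \<open>c \<noteq> 0\<close> c by (intro dLop_multiple_of_kernel_mode) auto
  with \<psi> have "eqY p0 p1 (Lop g jrho Gam p0 p1 lamstar \<psi>) (mode_forcing c lamstar p0 p1)"
    by (rule eqY_trans)
  with Lop_ne_mode_forcing[OF \<open>Gam > 0\<close> \<open>lamstar > 0\<close> \<open>p0 < p1\<close> \<open>p1 < 0\<close> \<open>c \<noteq> 0\<close> assms(12) \<open>Xsp a p0 p1 \<psi>\<close>]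
  show False by contradiction
qed

end
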